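(* Let $\alpha\in(0,1/2)$ and suppose $V_0(x)+V_1(x)>0$ for all $x\in\mathcal X$. Then the allocation policy minimizing $\mathrm{tr}(\Sigma_{\mathrm{eff}}(\pi))$ over $\pi\in\Pi_\alpha=\{\pi:\alpha\le\pi(x)\le1-\alpha\ \text{for all }x\}$ is $$\pi^\star(x)=\mathrm{clip}_\alpha\!\left(\frac{\sqrt{V_1(x)}}{\sqrt{V_1(x)}+\sqrt{V_0(x)}}\right),\qquad V_a(x)=\sum_{t=0}^{t_{\max}}v_{t,a}(x)=\mathrm{tr}(\Sigma_a(x)),$$ where $v_{t,a}(x)$ is the $t$-th diagonal entry of $\Sigma_a(x)$.
   Context: Discrete horizon $\mathcal T=\{0,\dots,t_{\max}\}$; unit $(X,A,T,C)$ with covariates $X$, treatment $A\in\{0,1\}$, event time $T$, censoring time $C$; observed $\mathcal O=(X,A,\widetilde T,\Delta)$, $\widetilde T=\min\{T,C\}$, $\Delta=\mathbf 1(T\le C)$. $S_t(x,a)=\mathbb P(T>t\mid X=x,A=a)$, $\lambda^S_t(x,a)=\mathbb P(\widetilde T=t,\Delta=1\mid\widetilde T\ge t,X=x,A=a)$, $\lambda^G_t(x,a)=\mathbb P(\widetilde T=t,\Delta=0\mid\widetilde T\ge t,X=x,A=a)$, $G_{t-1}(x,a)=\prod_{i=0}^{t-1}(1-\lambda^G_i(x,a)/(1-\lambda^S_i(x,a)))$, $S_{-1}=G_{-1}\equiv 1$. $\eta_t$ denotes the collection of these hazards up to time $t$, and $\xi(\mathcal O,\eta_t)=\sum_{i=0}^t\frac{\mathbf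 1(\widetilde T=i,\Delta=1)-\mathbf 1(\widetilde T\ge i)\lambda^S_i(X,A)}{S_i(X,A)G_{i-1}(X,A)}$. $\tau_t=\mathbb E[S_t(X,1)-S_t(X,0)]$, $\boldsymbol\tau=(\tau_t)_{t=0}^{t_{\max}}$, $\boldsymbol S(X,a)=(S_t(X,a))_{t=0}^{t_{\max}}$, $\boldsymbol\xi=(\xi(\mathcal O,\eta_t))_{t=0}^{t_{\max}}$. For a policy $\pi(x)=\mathbb P(A=1\mid X=x)$, $\Sigma_a(X)=\mathrm{Var}(\boldsymbol S(X,a)\odot\boldsymbol\xi\mid X,A=a)$ ($\odot$ entrywise product) and $\Sigma_{\mathrm{eff}}(\pi)=\mathbb E[\Sigma_1(X)/\pi(X)+\Sigma_0(X)/(1-\pi(X))]+\mathbb E[b(X)b(X)^\top]$ with $b(X)=\boldsymbol S(X,1)-\boldsymbol S(X,0)-\boldsymbol\tau$. $\mathrm{clip}_\alpha(u)=\min\{1-\alpha,\max\{\alpha,u\}\}$. *)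

theory Defs
  imports "HOL-Probability.Probability"
begin

text \<open>For covariate value x and treatment a (0 or 1),
  L x a is the conditional joint law of the latent pair (T, C) given X = x, A = a.\<close>

type_synonym 'x latent_law = "'x \<Rightarrow> nat \<Rightarrow> (nat \<times> nat) pmf"

definition Ttil :: "nat \<times> nat \<Rightarrow> nat" where
  "Ttil tc = min (fst tc) (snd tc)"

definition Dlt :: "nat \<times> nat \<Rightarrow> bool" where
  "Dlt tc = (fst tc \<le> snd tc)"

definition surv :: "'x latent_law \<Rightarrow> nat \<Rightarrow> 'x \<Rightarrow> nat \<Rightarrow> real" where
  "surv L t x a = measure_pmf.prob (L x a) {tc. t < fst tc}"

text \<open>lambda^S_i(x,a) and lambda^G_i(x,a) (conditional probabilities; x / 0 = 0 convention).\<close>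
definition hazS :: "'x latent_law \<Rightarrow> nat \<Rightarrow> 'x \<Rightarrow> nat \<Rightarrow> real" where
  "hazS L i x a = measure_pmf.prob (L x a) {tc. Ttil tc = i \<and> Dlt tc}
                  / measure_pmf.prob (L x a) {tc. i \<le> Ttil tc}"

definition hazG :: "'x latent_law \<Rightarrow> nat \<Rightarrow> 'x \<Rightarrow> nat \<Rightarrow> real" where
  "hazG L i x a = measure_pmf.prob (L x a) {tc. Ttil tc = i \<and> \<not> Dlt tc}
                  / measure_pmf.prob (L x a) {tc. i \<le> Ttil tc}"

text \<open>censprev L t x a = G_{t-1}(x,a) = prod_{i=0}^{t-1} (1 - lambda^G_i / (1 - lambda^S_i));
  in particular censprev L 0 x a = G_{-1} = 1.\<close>
definition censprev :: "'x latent_law \<Rightarrow> nat \<Rightarrow> 'x \<Rightarrow> nat \<Rightarrow> real" where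
  "censprev L t x a = (\<Prod>i<t. 1 - hazG L i x a / (1 - hazS L i x a))"

text \<open>xi(O, eta_t) evaluated at X = x, A = a, as a function of the latent pair (T, C).\<close>
definition xi :: "'x latent_law \<Rightarrow> nat \<Rightarrow> 'x \<Rightarrow> nat \<Rightarrow> nat \<times> nat \<Rightarrow> real" where
  "xi L t x a tc = (\<Sum>i\<le>t.
      ((if Ttil tc = i \<and> Dlt tc then 1 else 0) - (if i \<le> Ttil tc then 1 else 0) * hazS L i x a)
      / (surv L i x a * censprev L i x a))"

definition Zvec :: "'x latent_law \<Rightarrow> nat \<Rightarrow> 'x \<Rightarrow> nat \<Rightarrow> nat \<times> nat \<Rightarrow> real" where
  "Zvec L t x a tc = surv L t x a * xi L t x a tc"

definition Sigma_a :: "'x latent_law \<Rightarrow> nat \<Rightarrow> 'x \<Rightarrow> nat \<Rightarrow> nat \<Rightarrow> real" where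
  "Sigma_a L a x t s = measure_pmf.expectation (L x a)
     (\<lambda>tc. (Zvec L t x a tc - measure_pmf.expectation (L x a) (Zvec L t x a))
          * (Zvec L s x a tc - measure_pmf.expectation (L x a) (Zvec L s x a)))"

definition vdiag :: "'x latent_law \<Rightarrow> nat \<Rightarrow> nat \<Rightarrow> 'x \<Rightarrow> real" where
  "vdiag L t a x = Sigma_a L a x t t"

definition Vtr :: "nat \<Rightarrow> 'x latent_law \<Rightarrow> nat \<Rightarrow> 'x \<Rightarrow> real" where
  "Vtr tmax L a x = (\<Sum>t\<le>tmax. vdiag L t a x)"

definition tau :: "'x measure \<Rightarrow> 'x latent_law \<Rightarrow> nat \<Rightarrow> real" where
  "tau PX L t = (\<integral>x. surv L t x 1 - surv L t x 0 \<partial>PX)"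

definition bvec :: "'x measure \<Rightarrow> 'x latent_law \<Rightarrow> nat \<Rightarrow> 'x \<Rightarrow> real" where
  "bvec PX L t x = surv L t x 1 - surv L t x 0 - tau PX L t"

definition Sigma_eff :: "'x measure \<Rightarrow> 'x latent_law \<Rightarrow> ('x \<Rightarrow> real) \<Rightarrow> nat \<Rightarrow> nat \<Rightarrow> real" where
  "Sigma_eff PX L \<pi> t s =
     (\<integral>x. Sigma_a L 1 x t s / \<pi> x + Sigma_a L 0 x t s / (1 - \<pi> x) \<partial>PX)
     + (\<integral>x. bvec PX L t x * bvec PX L s x \<partial>PX)"

definition trace_Sigma_eff :: "nat \<Rightarrow> 'x measure \<Rightarrow> 'x latent_law \<Rightarrow> ('x \<Rightarrow> real) \<Rightarrow> real" where
  "trace_Sigma_eff tmax PX L \<pi> = (\<Sum>t\<le>tmax. Sigma_eff PX L \<pi> t t)"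

definition clip :: "real \<Rightarrow> real \<Rightarrow> real" where
  "clip \<alpha> u = min (1 - \<alpha>) (max \<alpha> u)"

definition Pi_alpha :: "'x measure \<Rightarrow> real \<Rightarrow> ('x \<Rightarrow> real) set" where
  "Pi_alpha PX \<alpha> = {\<pi>. \<pi> \<in> borel_measurable PX \<and> (\<forall>x\<in>space PX. \<alpha> \<le> \<pi> x \<and> \<pi> x \<le> 1 - \<alpha>)}"

end

theory Submission
  imports Defs
begin

text \<open>The trace of \<open>\<Sigma>\<^sub>e\<^sub>f\<^sub>f(\<pi>)\<close> is \<open>E[V\<^sub>1(X)/\<pi>(X) + V\<^sub>0(X)/(1 - \<pi>(X))]\<close> plus a term
  that does not depend on \<open>\<pi>\<close>, so it suffices to minimise the integrand pointwise.
  For \<open>a, b \<ge> 0\<close> the map \<open>p \<mapsto> a\<^sup>2/p + b\<^sup>2/(1 - p)\<close> is decreasing on \<open>(0, a/(a+b)]\<close> and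
  increasing on \<open>[a/(a+b), 1)\<close>, so its minimum over \<open>[\<alpha>, 1 - \<alpha>]\<close> is attained at
  \<open>clip\<^sub>\<alpha>(a/(a+b))\<close>; take \<open>a = \<surd>V\<^sub>1(x)\<close> and \<open>b = \<surd>V\<^sub>0(x)\<close>.\<close>

definition alloc_variance :: "real \<Rightarrow> real \<Rightarrow> real \<Rightarrow> real" where
  "alloc_variance u v p = u / p + v / (1 - p)"

lemma alloc_variance_one_minus: "alloc_variance u v (1 - p) = alloc_variance v u p"
  unfolding alloc_variance_def by simp

lemma alloc_variance_sum:
  "alloc_variance (\<Sum>i\<in>I. u i) (\<Sum>i\<in>I. v i) p = (\<Sum>i\<in>I. alloc_variance (u i) (v i) p)"
  unfolding alloc_variance_def by (simp add: sum_divide_distrib sum.distrib)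

lemma alloc_variance_mono:
  fixes a b p q :: real
  assumes "0 \<le> a" "0 \<le> b" "0 < q" "q \<le> p" "p < 1" and above: "a \<le> q * (a + b)"
  shows "alloc_variance (a\<^sup>2) (b\<^sup>2) q \<le> alloc_variance (a\<^sup>2) (b\<^sup>2) p"
proof -
  have at_q: "a * (1 - q) \<le> b * q"
    using above by (simp add: algebra_simps)
  have at_p: "a * (1 - p) \<le> b * p"
  proof -
    have "a * (1 - p) \<le> a * (1 - q)"
      using assms by (intro mult_left_mono) auto
    also have "\<dots> \<le> b * q" by fact
    also have "\<dots> \<le> b * p"
      using assms by (intro mult_left_mono) auto
    finally show ?thesis .
  qed
  have "(a * (1 - p)) * (a * (1 - q)) \<le> (b * p) * (b * q)"
    using assms by (intro mult_mono[OF at_p at_q]) auto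
  then have "0 \<le> b\<^sup>2 * p * q - a\<^sup>2 * (1 - p) * (1 - q)"
    by (simp add: power2_eq_square algebra_simps)
  with assms have "0 \<le> (p - q) * (b\<^sup>2 * p * q - a\<^sup>2 * (1 - p) * (1 - q)) / (p * q * (1 - p) * (1 - q))"
    by (intro divide_nonneg_pos mult_nonneg_nonneg mult_pos_pos) auto
  also have "\<dots> = alloc_variance (a\<^sup>2) (b\<^sup>2) p - alloc_variance (a\<^sup>2) (b\<^sup>2) q"
    using assms unfolding alloc_variance_def by (simp add: field_simps)
  finally show ?thesis by simp
qed

lemma alloc_variance_antimono:
  fixes a b p q :: real
  assumes "0 \<le> a" "0 \<le> b" "0 < p" "p \<le> q" "q < 1" and below: "q * (a + b) \<le> a"
  shows "alloc_variance (a\<^sup>2) (b\<^sup>2) q \<le> alloc_variance (a\<^sup>2) (b\<^sup>2) p"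
proof -
  have "b \<le> (1 - q) * (b + a)"
    using below by (simp add: algebra_simps)
  with assms have "alloc_variance (b\<^sup>2) (a\<^sup>2) (1 - q) \<le> alloc_variance (b\<^sup>2) (a\<^sup>2) (1 - p)"
    by (intro alloc_variance_mono) auto
  then show ?thesis
    by (simp add: alloc_variance_one_minus)
qed

lemma alloc_variance_clip_le:
  fixes a b p \<alpha> :: real
  assumes "0 \<le> a" "0 \<le> b" "0 < \<alpha>" "\<alpha> \<le> p" "p \<le> 1 - \<alpha>"
  shows "alloc_variance (a\<^sup>2) (b\<^sup>2) (clip \<alpha> (a / (a + b))) \<le> alloc_variance (a\<^sup>2) (b\<^sup>2) p"
proof -
  define r where "r = a / (a + b)"
  define q where "q = clip \<alpha> r"
  have q_bounds: "\<alpha> \<le> q" "q \<le> 1 - \<alpha>"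
    using assms unfolding q_def clip_def by auto
  have above: "a \<le> q * (a + b)" if "r \<le> q"
  proof (cases "a + b = 0")
    case False
    with that assms show ?thesis
      unfolding r_def by (simp add: divide_le_eq mult.commute)
  qed (use assms in simp)
  have below: "q * (a + b) \<le> a" if "q \<le> r"
  proof (cases "a + b = 0")
    case False
    with that assms show ?thesis
      unfolding r_def by (simp add: le_divide_eq mult.commute)
  qed (use assms q_bounds in simp)
  consider "q < p" | "q = p" | "p < q"
    by linarith
  then have "alloc_variance (a\<^sup>2) (b\<^sup>2) q \<le> alloc_variance (a\<^sup>2) (b\<^sup>2) p"
  proof cases
    case 1
    then have "r \<le> q"
      using assms unfolding q_def clip_def by auto
    with 1 assms q_bounds show ?thesis
      by (intro alloc_variance_mono above) auto
  next
    case 3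
    then have "q \<le> r"
      using assms unfolding q_def clip_def by auto
    with 3 assms q_bounds show ?thesis
      by (intro alloc_variance_antimono below) auto
  qed simp
  then show ?thesis
    unfolding q_def r_def .
qed

lemma alloc_variance_clip_sqrt_le:
  fixes u v p \<alpha> :: real
  assumes "0 \<le> u" "0 \<le> v" "0 < \<alpha>" "\<alpha> \<le> p" "p \<le> 1 - \<alpha>"
  shows "alloc_variance u v (clip \<alpha> (sqrt u / (sqrt u + sqrt v))) \<le> alloc_variance u v p"
  using alloc_variance_clip_le[of "sqrt u" "sqrt v" \<alpha> p] assms by simp

lemma clip_in_Pi_alpha:
  assumes "f \<in> borel_measurable M" "\<alpha> \<le> 1/2"
  shows "(\<lambda>x. clip \<alpha> (f x)) \<in> Pi_alpha M \<alpha>"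
  using assms unfolding Pi_alpha_def clip_def by auto

lemma integrable_divide_bounded_below:
  fixes f g :: "'a \<Rightarrow> real"
  assumes "integrable M f" "g \<in> borel_measurable M" "0 < c" "\<And>x. x \<in> space M \<Longrightarrow> c \<le> g x"
  shows "integrable M (\<lambda>x. f x / g x)"
proof (rule Bochner_Integration.integrable_bound)
  show "integrable M (\<lambda>x. f x / c)"
    using assms(1) by simp
  show "(\<lambda>x. f x / g x) \<in> borel_measurable M"
    using assms(1,2) by measurable
  show "AE x in M. norm (f x / g x) \<le> norm (f x / c)"
  proof (rule AE_I2)
    fix x assume "x \<in> space M"
    then have "c \<le> \<bar>g x\<bar>"
      using assms(4) by force
    then show "norm (f x / g x) \<le> norm (f x / c)"
      using assms(3) by (simp add: abs_divide divide_left_mono)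
  qed
qed

lemma integrable_alloc_variance:
  fixes u v :: "'a \<Rightarrow> real"
  assumes "integrable M u" "integrable M v" "\<pi> \<in> Pi_alpha M \<alpha>" "0 < \<alpha>"
  shows "integrable M (\<lambda>x. alloc_variance (u x) (v x) (\<pi> x))"
proof -
  have \<pi>_measurable: "\<pi> \<in> borel_measurable M"
    and \<pi>_bounds: "\<And>x. x \<in> space M \<Longrightarrow> \<alpha> \<le> \<pi> x \<and> \<pi> x \<le> 1 - \<alpha>"
    using assms(3) unfolding Pi_alpha_def by auto
  have "\<alpha> \<le> 1 - \<pi> x" if "x \<in> space M" for x
    using \<pi>_bounds[OF that] by linarith
  then have "integrable M (\<lambda>x. v x / (1 - \<pi> x))"
    using assms(2,4) \<pi>_measurable by (intro integrable_divide_bounded_below[where c = \<alpha>]) auto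
  moreover have "integrable M (\<lambda>x. u x / \<pi> x)"
    using assms(1,4) \<pi>_measurable \<pi>_bounds by (intro integrable_divide_bounded_below[where c = \<alpha>]) auto
  ultimately show ?thesis
    unfolding alloc_variance_def by simp
qed

lemma vdiag_nonneg: "0 \<le> vdiag L t a x"
  unfolding vdiag_def Sigma_a_def by (rule integral_nonneg_AE) auto

lemma Vtr_nonneg: "0 \<le> Vtr tmax L a x"
  unfolding Vtr_def by (intro sum_nonneg vdiag_nonneg)

lemma
  assumes "\<And>a t. a \<in> {0, 1} \<Longrightarrow> t \<le> tmax \<Longrightarrow> integrable PX (vdiag L t a)"
    and "\<pi> \<in> Pi_alpha PX \<alpha>" "0 < \<alpha>"
  shows integrable_Vtr_alloc_variance:
      "integrable PX (\<lambda>x. alloc_variance (Vtr tmax L 1 x) (Vtr tmax L 0 x) (\<pi> x))" (is ?integrable)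
    and trace_Sigma_eff_eq:
      "trace_Sigma_eff tmax PX L \<pi> =
         (\<integral>x. alloc_variance (Vtr tmax L 1 x) (Vtr tmax L 0 x) (\<pi> x) \<partial>PX)
         + (\<Sum>t\<le>tmax. \<integral>x. bvec PX L t x * bvec PX L t x \<partial>PX)" (is ?trace)
proof -
  have integrable_t: "integrable PX (\<lambda>x. alloc_variance (vdiag L t 1 x) (vdiag L t 0 x) (\<pi> x))"
    if "t \<le> tmax" for t
    using assms that by (intro integrable_alloc_variance) auto
  have Vtr_split: "alloc_variance (Vtr tmax L 1 x) (Vtr tmax L 0 x) (\<pi> x)
      = (\<Sum>t\<le>tmax. alloc_variance (vdiag L t 1 x) (vdiag L t 0 x) (\<pi> x))" for x
    unfolding Vtr_def by (rule alloc_variance_sum)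
  show ?integrable
    unfolding Vtr_split using integrable_t by auto
  have "(\<integral>x. alloc_variance (Vtr tmax L 1 x) (Vtr tmax L 0 x) (\<pi> x) \<partial>PX)
      = (\<Sum>t\<le>tmax. \<integral>x. alloc_variance (vdiag L t 1 x) (vdiag L t 0 x) (\<pi> x) \<partial>PX)"
    unfolding Vtr_split using integrable_t by (intro Bochner_Integration.integral_sum) auto
  then show ?trace
    unfolding trace_Sigma_eff_def Sigma_eff_def vdiag_def alloc_variance_def
    by (simp add: sum.distrib)
qed

lemma trace_Sigma_eff_mono:
  assumes "\<And>a t. a \<in> {0, 1} \<Longrightarrow> t \<le> tmax \<Longrightarrow> integrable PX (vdiag L t a)"
    and "\<pi> \<in> Pi_alpha PX \<alpha>" "\<pi>' \<in> Pi_alpha PX \<alpha>" "0 < \<alpha>"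
    and "\<And>x. x \<in> space PX \<Longrightarrow>
      alloc_variance (Vtr tmax L 1 x) (Vtr tmax L 0 x) (\<pi> x)
      \<le> alloc_variance (Vtr tmax L 1 x) (Vtr tmax L 0 x) (\<pi>' x)"
  shows "trace_Sigma_eff tmax PX L \<pi> \<le> trace_Sigma_eff tmax PX L \<pi>'"
proof -
  have "(\<integral>x. alloc_variance (Vtr tmax L 1 x) (Vtr tmax L 0 x) (\<pi> x) \<partial>PX)
      \<le> (\<integral>x. alloc_variance (Vtr tmax L 1 x) (Vtr tmax L 0 x) (\<pi>' x) \<partial>PX)"
    using assms by (intro integral_mono integrable_Vtr_alloc_variance) auto
  then show ?thesis
    using trace_Sigma_eff_eq[where tmax = tmax, OF assms(1,2,4)]
      trace_Sigma_eff_eq[where tmax = tmax, OF assms(1,3,4)] by linarith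
qed

theorem proposition1:
  fixes PX :: "'x measure" and L :: "'x latent_law" and tmax :: nat and \<alpha> :: real
  assumes "prob_space PX"
    and "0 < \<alpha>" and "\<alpha> < 1/2"
    and "\<forall>x\<in>space PX. Vtr tmax L 0 x + Vtr tmax L 1 x > 0"
    and "\<forall>a\<in>{0,1}. \<forall>t\<le>tmax. integrable PX (\<lambda>x. vdiag L t a x)"
    and "\<forall>a\<in>{0,1}. \<forall>t\<le>tmax. (\<lambda>x. surv L t x a) \<in> borel_measurable PX"
  shows "(\<lambda>x. clip \<alpha> (sqrt (Vtr tmax L 1 x) / (sqrt (Vtr tmax L 1 x) + sqrt (Vtr tmax L 0 x))))
           \<in> Pi_alpha PX \<alpha>
       \<and> (\<forall>\<pi>\<in>Pi_alpha PX \<alpha>.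
            trace_Sigma_eff tmax PX L
              (\<lambda>x. clip \<alpha> (sqrt (Vtr tmax L 1 x) / (sqrt (Vtr tmax L 1 x) + sqrt (Vtr tmax L 0 x))))
            \<le> trace_Sigma_eff tmax PX L \<pi>)"
proof -
  \<comment> \<open>Neither \<open>prob_space PX\<close>, nor positivity of \<open>V\<^sub>0 + V\<^sub>1\<close> (at \<open>V\<^sub>0 = V\<^sub>1 = 0\<close> the integrand
    vanishes for every policy), nor measurability of \<open>surv\<close> is needed.\<close>
  define \<pi>\<^sub>o\<^sub>p\<^sub>t where
    "\<pi>\<^sub>o\<^sub>p\<^sub>t x = clip \<alpha> (sqrt (Vtr tmax L 1 x) / (sqrt (Vtr tmax L 1 x) + sqrt (Vtr tmax L 0 x)))" for x
  have integrable_vdiag: "\<And>a t. a \<in> {0, 1} \<Longrightarrow> t \<le> tmax \<Longrightarrow> integrable PX (vdiag L t a)"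
    using assms(5) by auto
  have "Vtr tmax L a \<in> borel_measurable PX" if "a \<in> {0, 1}" for a
    unfolding Vtr_def using integrable_vdiag[OF that] by measurable
  then have opt_in: "\<pi>\<^sub>o\<^sub>p\<^sub>t \<in> Pi_alpha PX \<alpha>"
    unfolding \<pi>\<^sub>o\<^sub>p\<^sub>t_def using assms(3) by (intro clip_in_Pi_alpha) simp_all
  have "trace_Sigma_eff tmax PX L \<pi>\<^sub>o\<^sub>p\<^sub>t \<le> trace_Sigma_eff tmax PX L \<pi>" if "\<pi> \<in> Pi_alpha PX \<alpha>" for \<pi>
  proof (rule trace_Sigma_eff_mono[OF integrable_vdiag opt_in that assms(2)])
    fix x assume "x \<in> space PX"
    with that have "\<alpha> \<le> \<pi> x" "\<pi> x \<le> 1 - \<alpha>"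
      unfolding Pi_alpha_def by auto
    with assms(2) show "alloc_variance (Vtr tmax L 1 x) (Vtr tmax L 0 x) (\<pi>\<^sub>o\<^sub>p\<^sub>t x)
        \<le> alloc_variance (Vtr tmax L 1 x) (Vtr tmax L 0 x) (\<pi> x)"
      unfolding \<pi>\<^sub>o\<^sub>p\<^sub>t_def by (intro alloc_variance_clip_sqrt_le Vtr_nonneg)
  qed
  with opt_in show ?thesis
    unfolding \<pi>\<^sub>o\<^sub>p\<^sub>t_def by blast
qed

end
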